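(* Consider the multidimensional robust Bayesian persuasion setting described in the context. For every $k$, every $n_1,\dots,n_k$, and every product prior $\mu=\mu_1\times\cdots\times\mu_k$ (with $\mu_j\in\Delta([n_j])$) of full support, $\mathrm{Reg}_{\mathrm{MON\text{-}MD}}\le 1-2^{-k}$.
   Context: Setting: the state space is $\Omega=\prod_{j=1}^k [n_j]$ with a publicly known prior $\mu\in\Delta(\Omega)$ assigning positive probability to every state. A signaling scheme is a stochastic map $\pi$ from $\Omega$ to a (finite or infinite) signal set $S$; Sender commits to $\pi$, the state $\omega\sim\mu$ is drawn, a signal $s\sim\pi(\omega)$ is sent, and Receiver forms the Bayesian posterior $p(s)\in\Delta(\Omega)$. Receiver has actions $\{0,1\}$ (reject/adopt) and utility $u_r:\Omega\times\{0,1\}\to\mathbb{R}$ with $u_r(\omega,0)=0$ for all $\omega$; Receiver adopts at posterior $p$ iff $\mathbb{E}_{\omega'\sim p}[u_r(\omega',1)]\ge 0$ (ties broken in favor of adoption). Sender's utility is $u(\pi,u_r)=\Pr_s[\text{Receiver adopts at }p(s)]$, and $u^*(u_r)=\sup_\pi u(\pi,u_r)$. $\mathrm{Reg}_{\mathrm{MON\text{-}MD}}=\inf_\pi\sup_{u_r\in\mathcal{U}}\{u^*(u_r)-u(\pi,u_r)\}$, where $\mathcal{U}$ is the class of Receiver utilities such that $u_r(\cdot,1)$ is non-decreasing in each coordinate: for every $j$, every $\omega'_j\le\omega''_j$ and every $\omega_{-j}$, $u_r((\omega'_j,\omega_{-j}),1)\le u_r((\omega''_j,\omega_{-j}),1)$.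 *)

theory Defs
  imports "HOL-Probability.Probability"
begin

definition states :: "nat \<Rightarrow> (nat \<Rightarrow> nat) \<Rightarrow> (nat \<Rightarrow> nat) set" where
  "states k n = PiE {..<k} (\<lambda>j. {..<n j})"

definition prod_prior :: "nat \<Rightarrow> (nat \<Rightarrow> nat \<Rightarrow> real) \<Rightarrow> (nat \<Rightarrow> nat) \<Rightarrow> real" where
  "prod_prior k m \<omega> = (\<Prod>j<k. m j (\<omega> j))"

definition sig_prob :: "('w set) \<Rightarrow> ('w \<Rightarrow> real) \<Rightarrow> ('w \<Rightarrow> nat pmf) \<Rightarrow> nat \<Rightarrow> real" where
  "sig_prob \<Omega> \<mu> \<pi> s = (\<Sum>\<omega>\<in>\<Omega>. \<mu> \<omega> * pmf (\<pi> \<omega>) s)"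

definition posterior :: "('w set) \<Rightarrow> ('w \<Rightarrow> real) \<Rightarrow> ('w \<Rightarrow> nat pmf) \<Rightarrow> nat \<Rightarrow> 'w \<Rightarrow> real" where
  "posterior \<Omega> \<mu> \<pi> s \<omega> = \<mu> \<omega> * pmf (\<pi> \<omega>) s / sig_prob \<Omega> \<mu> \<pi> s"

text \<open>Receiver adopts at posterior p iff E_{p}[u_r(.,1)] >= 0 (ties favour adoption);
  u :: state => real stands for u_r(.,1) (u_r(.,0) = 0).\<close>
definition adopts :: "('w set) \<Rightarrow> ('w \<Rightarrow> real) \<Rightarrow> ('w \<Rightarrow> nat pmf) \<Rightarrow> ('w \<Rightarrow> real) \<Rightarrow> nat \<Rightarrow> bool" where
  "adopts \<Omega> \<mu> \<pi> u s \<longleftrightarrow> (\<Sum>\<omega>\<in>\<Omega>. posterior \<Omega> \<mu> \<pi> s \<omega> * u \<omega>) \<ge> 0"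

definition sender_util :: "('w set) \<Rightarrow> ('w \<Rightarrow> real) \<Rightarrow> ('w \<Rightarrow> nat pmf) \<Rightarrow> ('w \<Rightarrow> real) \<Rightarrow> real" where
  "sender_util \<Omega> \<mu> \<pi> u = (\<Sum>\<omega>\<in>\<Omega>. \<mu> \<omega> * measure_pmf.prob (\<pi> \<omega>) {s. adopts \<Omega> \<mu> \<pi> u s})"

definition opt_util :: "('w set) \<Rightarrow> ('w \<Rightarrow> real) \<Rightarrow> ('w \<Rightarrow> real) \<Rightarrow> real" where
  "opt_util \<Omega> \<mu> u = (SUP \<pi>. sender_util \<Omega> \<mu> \<pi> u)"

definition mon_utils :: "nat \<Rightarrow> (nat \<Rightarrow> nat) \<Rightarrow> ((nat \<Rightarrow> nat) \<Rightarrow> real) set" where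
  "mon_utils k n = {u. \<forall>\<omega>\<in>states k n. \<forall>j<k. \<forall>a b. a \<le> b \<and> b < n j \<longrightarrow>
                          u (fun_upd \<omega> j a) \<le> u (fun_upd \<omega> j b)}"

definition reg_mon_md :: "nat \<Rightarrow> (nat \<Rightarrow> nat) \<Rightarrow> ((nat \<Rightarrow> nat) \<Rightarrow> real) \<Rightarrow> real" where
  "reg_mon_md k n \<mu> = (INF \<pi>. SUP u\<in>mon_utils k n.
      opt_util (states k n) \<mu> u - sender_util (states k n) \<mu> \<pi> u)"

end

theory Submission
  imports Defs
begin

text \<open>Split every marginal \<open>m j\<close> at a weighted median \<open>p j\<close> into an upper half \<open>h j\<close> and a
  lower half \<open>l j\<close>, each of mass 1/2, and let \<open>\<eta> = \<Prod>j. h j\<close>, of total mass \<open>2^-k\<close>. Sender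
  sends signal 1 with probability \<open>\<eta>/\<mu>\<close>, so that its posterior is \<open>2^k \<eta>\<close>. If Receiver adopts
  there, Sender gets at least \<open>2^-k\<close>. Otherwise \<open>E\<^sub>\<eta> u < 0\<close>, and since \<open>\<eta>\<close> lives above the median
  point \<open>p\<close>, also \<open>u p < 0\<close>. Weak duality with multiplier \<open>t = -1 / u p\<close> bounds every scheme by
  \<open>E\<^sub>\<mu> \<phi>\<close> for \<open>\<phi> = max 0 (1 + t u)\<close>, which is monotone and vanishes at and below \<open>p\<close>.
  Expanding \<open>\<mu> = \<Prod>j. (h j + l j)\<close> into \<open>2^k\<close> products, the all-lower one contributes nothing and
  each of the others is at most \<open>E\<^sub>\<eta> \<phi> \<le> 2^-k\<close> by first-order dominance; hence
  \<open>u* \<le> 1 - 2^-k\<close>.\<close>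

abbreviation grid :: "nat set \<Rightarrow> (nat \<Rightarrow> nat) \<Rightarrow> (nat \<Rightarrow> nat) set" where
  "grid I n \<equiv> PiE I (\<lambda>j. {..<n j})"

definition coordwise_mono :: "nat set \<Rightarrow> (nat \<Rightarrow> nat) \<Rightarrow> ((nat \<Rightarrow> nat) \<Rightarrow> real) \<Rightarrow> bool" where
  "coordwise_mono I n \<phi> \<longleftrightarrow> (\<forall>x\<in>grid I n. \<forall>j\<in>I. \<forall>a b. a \<le> b \<and> b < n j \<longrightarrow>
      \<phi> (x(j := a)) \<le> \<phi> (x(j := b)))"

lemma coordwise_monoD:
  assumes "coordwise_mono I n \<phi>" "x \<in> grid I n" "j \<in> I" "a \<le> b" "b < n j"
  shows "\<phi> (x(j := a)) \<le> \<phi> (x(j := b))"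
  using assms unfolding coordwise_mono_def by blast

lemma mon_utils_iff_coordwise_mono: "u \<in> mon_utils k n \<longleftrightarrow> coordwise_mono {..<k} n u"
  unfolding mon_utils_def coordwise_mono_def states_def by auto

lemma coordwise_mono_le:
  assumes "finite I" "coordwise_mono I n \<phi>" "x \<in> grid I n" "z \<in> grid I n"
    and "\<forall>j\<in>I. x j \<le> z j"
  shows "\<phi> x \<le> \<phi> z"
proof -
  have "\<phi> x \<le> \<phi> z"
    if "finite S" "S \<subseteq> I" "z \<in> grid I n" "\<forall>j\<in>I. x j \<le> z j" "\<forall>j\<in>I - S. x j = z j"
    for S z
    using that
  proof (induction S arbitrary: z rule: finite_induct)
    case empty
    then have "x = z" using assms(3) by (intro PiE_ext) auto
    then show ?case by simp
  next
    case (insert s S)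
    define z' where "z' = z(s := x s)"
    have s: "s \<in> I" using insert.prems by auto
    have "x s < n s" using assms(3) s by auto
    then have z': "z' \<in> grid I n"
      unfolding z'_def using insert.prems(2) s PiE_fun_upd[of "x s" "\<lambda>j. {..<n j}" s z I]
      by (simp add: insert_absorb)
    have "\<phi> x \<le> \<phi> z'"
      using insert.prems by (intro insert.IH z') (auto simp: z'_def)
    also have "\<phi> z' \<le> \<phi> (z'(s := z s))"
      using coordwise_monoD[OF assms(2) z' s, of "x s" "z s"] s insert.prems(2,3)
      by (auto simp: z'_def)
    also have "z'(s := z s) = z" unfolding z'_def by simp
    finally show ?case .
  qed
  then show ?thesis using assms by blast
qed

lemma coordwise_mono_slice:
  assumes "coordwise_mono (insert k I) n \<phi>" "k \<notin> I" "y < n k"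
  shows "coordwise_mono I n (\<lambda>x. \<phi> (x(k := y)))"
  unfolding coordwise_mono_def
proof (intro ballI allI impI)
  fix x j a b
  assume x: "x \<in> grid I n" and j: "j \<in> I" and ab: "a \<le> b \<and> b < n j"
  have "x(k := y) \<in> grid (insert k I) n"
    using x assms(3) by (intro PiE_fun_upd) auto
  then have "\<phi> (x(k := y, j := a)) \<le> \<phi> (x(k := y, j := b))"
    using assms(1) j ab unfolding coordwise_mono_def by blast
  moreover have "j \<noteq> k" using j assms(2) by auto
  ultimately show "\<phi> (x(j := a, k := y)) \<le> \<phi> (x(j := b, k := y))"
    by (simp add: fun_upd_twist)
qed

definition prod_weighted_sum ::
    "nat set \<Rightarrow> (nat \<Rightarrow> nat) \<Rightarrow> (nat \<Rightarrow> nat \<Rightarrow> real) \<Rightarrow> ((nat \<Rightarrow> nat) \<Rightarrow> real) \<Rightarrow> real" where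
  "prod_weighted_sum I n w \<phi> = (\<Sum>x\<in>grid I n. (\<Prod>j\<in>I. w j (x j)) * \<phi> x)"

lemma sum_PiE_insert:
  assumes "finite I" "k \<notin> I"
  shows "(\<Sum>g\<in>PiE (insert k I) A. F g) = (\<Sum>y\<in>A k. \<Sum>g\<in>PiE I A. F (g(k := y)))"
proof -
  have "(\<Sum>g\<in>PiE (insert k I) A. F g) = (\<Sum>g\<in>(\<lambda>(y, g). g(k := y)) ` (A k \<times> PiE I A). F g)"
    by (simp add: PiE_insert_eq)
  also have "\<dots> = (\<Sum>(y, g)\<in>A k \<times> PiE I A. F (g(k := y)))"
    by (subst sum.reindex[OF inj_combinator[OF assms(2)]]) (simp add: case_prod_unfold)
  also have "\<dots> = (\<Sum>y\<in>A k. \<Sum>g\<in>PiE I A. F (g(k := y)))"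
    by (rule sum.cartesian_product[symmetric])
  finally show ?thesis .
qed

lemma prod_weighted_sum_insert:
  assumes "finite I" "k \<notin> I"
  shows "prod_weighted_sum (insert k I) n w \<phi> =
    (\<Sum>y<n k. w k y * prod_weighted_sum I n w (\<lambda>x. \<phi> (x(k := y))))"
proof -
  have prod_upd: "(\<Prod>j\<in>insert k I. w j ((x(k := y)) j)) = w k y * (\<Prod>j\<in>I. w j (x j))" for x y
  proof -
    have "(\<Prod>j\<in>I. w j ((x(k := y)) j)) = (\<Prod>j\<in>I. w j (x j))"
      using assms by (intro prod.cong) auto
    then show ?thesis using assms by (subst prod.insert) simp_all
  qed
  have "prod_weighted_sum (insert k I) n w \<phi> =
      (\<Sum>y<n k. \<Sum>x\<in>grid I n. (\<Prod>j\<in>insert k I. w j ((x(k := y)) j)) * \<phi> (x(k := y)))"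
    unfolding prod_weighted_sum_def using assms by (rule sum_PiE_insert)
  also have "\<dots> = (\<Sum>y<n k. w k y * prod_weighted_sum I n w (\<lambda>x. \<phi> (x(k := y))))"
    unfolding prod_upd prod_weighted_sum_def by (simp only: sum_distrib_left mult.assoc)
  finally show ?thesis .
qed

lemma prod_weighted_sum_slice_mono:
  assumes "coordwise_mono (insert k I) n \<phi>" "\<forall>j\<in>I. \<forall>i<n j. 0 \<le> w j i" "a \<le> b" "b < n k"
  shows "prod_weighted_sum I n w (\<lambda>x. \<phi> (x(k := a)))
    \<le> prod_weighted_sum I n w (\<lambda>x. \<phi> (x(k := b)))"
  unfolding prod_weighted_sum_def
proof (rule sum_mono)
  fix x assume x: "x \<in> grid I n"
  have "x(k := a) \<in> grid (insert k I) n"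
    using x assms(3,4) by (intro PiE_fun_upd) auto
  then have "\<phi> (x(k := a)) \<le> \<phi> (x(k := b))"
    using coordwise_monoD[OF assms(1), of "x(k := a)" k a b] assms(3,4) by simp
  moreover have "0 \<le> (\<Prod>j\<in>I. w j (x j))"
    using x assms(2) by (intro prod_nonneg) auto
  ultimately show "(\<Prod>j\<in>I. w j (x j)) * \<phi> (x(k := a)) \<le> (\<Prod>j\<in>I. w j (x j)) * \<phi> (x(k := b))"
    by (simp add: mult_left_mono)
qed

definition upper_lower_split ::
    "nat set \<Rightarrow> (nat \<Rightarrow> nat) \<Rightarrow> (nat \<Rightarrow> nat \<Rightarrow> real) \<Rightarrow> (nat \<Rightarrow> nat \<Rightarrow> real) \<Rightarrow> (nat \<Rightarrow> nat) \<Rightarrow> bool" where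
  "upper_lower_split I n h l p \<longleftrightarrow> (\<forall>j\<in>I. p j < n j \<and>
     (\<forall>i<n j. 0 \<le> h j i \<and> 0 \<le> l j i \<and>
        (i < p j \<longrightarrow> h j i = 0) \<and> (p j < i \<longrightarrow> l j i = 0)) \<and>
     (\<Sum>i<n j. h j i) = (\<Sum>i<n j. l j i))"

lemma upper_lower_split_subset:
  "upper_lower_split J n h l p \<Longrightarrow> I \<subseteq> J \<Longrightarrow> upper_lower_split I n h l p"
  unfolding upper_lower_split_def by blast

lemma upper_lower_split_dominance:
  assumes split: "upper_lower_split I n h l p" and j: "j \<in> I"
    and mono: "\<And>a b. a \<le> b \<Longrightarrow> b < n j \<Longrightarrow> \<psi> a \<le> \<psi> b"
  shows "(\<Sum>i<n j. l j i * \<psi> i) \<le> (\<Sum>i<n j. h j i * \<psi> i)"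
proof -
  have p: "p j < n j" using split j unfolding upper_lower_split_def by blast
  have "0 \<le> (\<Sum>i<n j. (h j i - l j i) * (\<psi> i - \<psi> (p j)))"
  proof (rule sum_nonneg)
    fix i assume "i \<in> {..<n j}"
    then have i: "i < n j" by simp
    have hl: "0 \<le> h j i" "0 \<le> l j i" "i < p j \<Longrightarrow> h j i = 0" "p j < i \<Longrightarrow> l j i = 0"
      using split j i unfolding upper_lower_split_def by blast+
    consider "i < p j" | "i = p j" | "p j < i" by linarith
    then show "0 \<le> (h j i - l j i) * (\<psi> i - \<psi> (p j))"
    proof cases
      case 1
      then show ?thesis using hl mono[of i "p j"] p by (simp add: mult_nonneg_nonpos)
    next
      case 3
      then show ?thesis using hl mono[of "p j" i] i by simp
    qed simp
  qed
  also have "\<dots> = (\<Sum>i<n j. h j i * \<psi> i) - (\<Sum>i<n j. l j i * \<psi> i)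
      - \<psi> (p j) * ((\<Sum>i<n j. h j i) - (\<Sum>i<n j. l j i))"
    by (simp add: algebra_simps sum_subtractf sum_distrib_left sum.distrib)
  finally show ?thesis using split j unfolding upper_lower_split_def by simp
qed

lemma prod_weighted_sum_lower_le_upper:
  assumes "finite I" "upper_lower_split I n h l p" "coordwise_mono I n \<phi>"
  shows "prod_weighted_sum I n l \<phi> \<le> prod_weighted_sum I n h \<phi>"
  using assms
proof (induction I arbitrary: \<phi> rule: finite_induct)
  case empty
  then show ?case by (simp add: prod_weighted_sum_def)
next
  case (insert k I)
  have split: "upper_lower_split I n h l p"
    using insert.prems(1) by (rule upper_lower_split_subset) auto
  have nonneg: "\<forall>j\<in>insert k I. \<forall>i<n j. 0 \<le> h j i \<and> 0 \<le> l j i"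
    using insert.prems(1) unfolding upper_lower_split_def by blast
  let ?slice = "\<lambda>w y. prod_weighted_sum I n w (\<lambda>x. \<phi> (x(k := y)))"
  have "prod_weighted_sum (insert k I) n l \<phi> = (\<Sum>y<n k. l k y * ?slice l y)"
    using insert.hyps by (rule prod_weighted_sum_insert)
  also have "\<dots> \<le> (\<Sum>y<n k. l k y * ?slice h y)"
  proof (rule sum_mono)
    fix y assume "y \<in> {..<n k}"
    then have y: "y < n k" by simp
    have "?slice l y \<le> ?slice h y"
      by (rule insert.IH[OF split coordwise_mono_slice[OF insert.prems(2) insert.hyps(2) y]])
    then show "l k y * ?slice l y \<le> l k y * ?slice h y"
      using nonneg y by (simp add: mult_left_mono)
  qed
  also have "\<dots> \<le> (\<Sum>y<n k. h k y * ?slice h y)"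
    using insert.prems(1) nonneg
    by (intro upper_lower_split_dominance prod_weighted_sum_slice_mono[OF insert.prems(2)]) auto
  also have "\<dots> = prod_weighted_sum (insert k I) n h \<phi>"
    using insert.hyps by (rule prod_weighted_sum_insert[symmetric])
  finally show ?case .
qed

text \<open>Expanding the product of the sums \<open>h j + l j\<close> gives \<open>2 ^ card I\<close> mixed products; all but
  the all-lower one are dominated by the all-upper one.\<close>
lemma prod_weighted_sum_le_lower_upper:
  assumes "finite I" "upper_lower_split I n h l p" "coordwise_mono I n \<phi>"
  shows "prod_weighted_sum I n (\<lambda>j i. h j i + l j i) \<phi>
    \<le> prod_weighted_sum I n l \<phi> + (2 ^ card I - 1) * prod_weighted_sum I n h \<phi>"
  using assms
proof (induction I arbitrary: \<phi> rule: finite_induct)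
  case empty
  then show ?case by (simp add: prod_weighted_sum_def)
next
  case (insert k I)
  define c :: real where "c = 2 ^ card I"
  have c: "1 \<le> c" unfolding c_def by simp
  have split: "upper_lower_split I n h l p"
    using insert.prems(1) by (rule upper_lower_split_subset) auto
  have nonneg: "\<forall>j\<in>insert k I. \<forall>i<n j. 0 \<le> h j i \<and> 0 \<le> l j i"
    using insert.prems(1) unfolding upper_lower_split_def by blast
  define F where "F y = prod_weighted_sum I n (\<lambda>j i. h j i + l j i) (\<lambda>x. \<phi> (x(k := y)))" for y
  define G where "G y = prod_weighted_sum I n l (\<lambda>x. \<phi> (x(k := y)))" for y
  define H where "H y = prod_weighted_sum I n h (\<lambda>x. \<phi> (x(k := y)))" for y
  have FG: "F y \<le> G y + (c - 1) * H y" and GH: "G y \<le> H y" if "y < n k" for y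
    using insert.IH[OF split coordwise_mono_slice[OF insert.prems(2) insert.hyps(2) that]]
      prod_weighted_sum_lower_le_upper[OF insert.hyps(1) split
        coordwise_mono_slice[OF insert.prems(2) insert.hyps(2) that]]
    unfolding F_def G_def H_def c_def by (simp_all del: fun_upd_apply)
  have "prod_weighted_sum (insert k I) n (\<lambda>j i. h j i + l j i) \<phi>
      = (\<Sum>y<n k. h k y * F y) + (\<Sum>y<n k. l k y * F y)"
    unfolding F_def using insert.hyps
    by (simp add: prod_weighted_sum_insert distrib_right sum.distrib)
  also have "\<dots> \<le> (\<Sum>y<n k. h k y * (c * H y)) + (\<Sum>y<n k. l k y * (G y + (c - 1) * H y))"
  proof (intro add_mono sum_mono)
    fix y assume "y \<in> {..<n k}"
    then have y: "y < n k" by simp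
    show "h k y * F y \<le> h k y * (c * H y)"
      using FG[OF y] GH[OF y] nonneg y by (intro mult_left_mono) (auto simp: algebra_simps)
    show "l k y * F y \<le> l k y * (G y + (c - 1) * H y)"
      using FG[OF y] nonneg y by (intro mult_left_mono) auto
  qed
  also have "\<dots> = (\<Sum>y<n k. l k y * G y) + c * (\<Sum>y<n k. h k y * H y)
      + (c - 1) * (\<Sum>y<n k. l k y * H y)"
    by (simp add: sum_distrib_left sum.distrib sum_subtractf algebra_simps)
  also have "\<dots> \<le> (\<Sum>y<n k. l k y * G y) + c * (\<Sum>y<n k. h k y * H y)
      + (c - 1) * (\<Sum>y<n k. h k y * H y)"
    unfolding H_def using c insert.prems(1) nonneg
    by (intro add_left_mono mult_left_mono upper_lower_split_dominance
        prod_weighted_sum_slice_mono[OF insert.prems(2)]) auto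
  also have "\<dots> = prod_weighted_sum (insert k I) n l \<phi>
      + (2 ^ card (insert k I) - 1) * prod_weighted_sum (insert k I) n h \<phi>"
    using insert.hyps by (simp add: prod_weighted_sum_insert G_def H_def c_def algebra_simps)
  finally show ?case .
qed

lemma exists_upper_tail:
  fixes m :: "nat \<Rightarrow> real"
  assumes "0 < N" "\<forall>i<N. 0 \<le> m i" "0 \<le> c" "c \<le> (\<Sum>i<N. m i)"
  shows "\<exists>p h. p < N \<and> (\<forall>i<N. 0 \<le> h i \<and> h i \<le> m i) \<and> (\<Sum>i<N. h i) = c \<and>
    (\<forall>i<N. i < p \<longrightarrow> h i = 0) \<and> (\<forall>i<N. p < i \<longrightarrow> h i = m i)"
  using assms
proof (induction N arbitrary: c)
  case 0
  then show ?case by simp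
next
  case (Suc N)
  show ?case
  proof (cases "c \<le> m N")
    case True
    define h where "h i = (if i = N then c else 0)" for i
    have "(\<Sum>i<Suc N. h i) = c" unfolding h_def by (simp add: sum.If_cases)
    then show ?thesis using True Suc.prems
      by (intro exI[of _ N] exI[of _ h]) (auto simp: h_def)
  next
    case False
    then have "0 < N" using Suc.prems by (cases N) auto
    then obtain p h where ph: "p < N" "\<forall>i<N. 0 \<le> h i \<and> h i \<le> m i" "(\<Sum>i<N. h i) = c - m N"
      "\<forall>i<N. i < p \<longrightarrow> h i = 0" "\<forall>i<N. p < i \<longrightarrow> h i = m i"
      using Suc.IH[of "c - m N"] Suc.prems False by auto
    have "(\<Sum>i<Suc N. (h(N := m N)) i) = (\<Sum>i<N. h i) + m N"
      by (simp add: sum.cong[of "{..<N}" "{..<N}" "h(N := m N)" h])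
    then show ?thesis using ph Suc.prems
      by (intro exI[of _ p] exI[of _ "h(N := m N)"]) (auto simp: less_Suc_eq)
  qed
qed

lemma infsetsum_sum:
  assumes "finite W" "\<And>w. w \<in> W \<Longrightarrow> Infinite_Set_Sum.abs_summable_on (f w) A"
  shows "(\<Sum>\<^sub>as\<in>A. \<Sum>w\<in>W. f w s) = (\<Sum>w\<in>W. \<Sum>\<^sub>as\<in>A. f w s)"
  using assms unfolding infsetsum_def abs_summable_on_def
  by (intro Bochner_Integration.integral_sum) auto

lemma adopted_expectation_nonneg:
  fixes \<Omega> :: "'w set" and \<mu> :: "'w \<Rightarrow> real"
  assumes fin: "finite \<Omega>" and \<mu>: "\<forall>x\<in>\<Omega>. 0 \<le> \<mu> x"
  shows "0 \<le> (\<Sum>x\<in>\<Omega>. \<mu> x * measure_pmf.prob (\<pi> x) {s. adopts \<Omega> \<mu> \<pi> u s} * u x)"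
proof -
  define A where "A = {s. adopts \<Omega> \<mu> \<pi> u s}"
  have "(\<Sum>x\<in>\<Omega>. \<mu> x * measure_pmf.prob (\<pi> x) A * u x)
      = (\<Sum>x\<in>\<Omega>. \<Sum>\<^sub>as\<in>A. \<mu> x * u x * pmf (\<pi> x) s)"
    by (intro sum.cong refl)
       (simp add: measure_pmf_conv_infsetsum infsetsum_cmult_right pmf_abs_summable)
  also have "\<dots> = (\<Sum>\<^sub>as\<in>A. \<Sum>x\<in>\<Omega>. \<mu> x * u x * pmf (\<pi> x) s)"
    using fin by (intro infsetsum_sum[symmetric] abs_summable_on_cmult_right pmf_abs_summable)
  also have "\<dots> \<ge> 0"
  proof (rule infsetsum_nonneg)
    fix s assume s: "s \<in> A"
    show "0 \<le> (\<Sum>x\<in>\<Omega>. \<mu> x * u x * pmf (\<pi> x) s)"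
    proof (cases "sig_prob \<Omega> \<mu> \<pi> s = 0")
      case True
      then have "\<forall>x\<in>\<Omega>. \<mu> x * pmf (\<pi> x) s = 0"
        using fin \<mu> unfolding sig_prob_def by (subst (asm) sum_nonneg_eq_0_iff) auto
      then have "(\<Sum>x\<in>\<Omega>. \<mu> x * u x * pmf (\<pi> x) s) = 0"
        by (intro sum.neutral) (auto simp: algebra_simps)
      then show ?thesis by simp
    next
      case False
      have "(\<Sum>x\<in>\<Omega>. \<mu> x * u x * pmf (\<pi> x) s)
          = sig_prob \<Omega> \<mu> \<pi> s * (\<Sum>x\<in>\<Omega>. posterior \<Omega> \<mu> \<pi> s x * u x)"
        using False unfolding posterior_def by (simp add: sum_distrib_left algebra_simps)
      moreover have "0 \<le> sig_prob \<Omega> \<mu> \<pi> s"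
        unfolding sig_prob_def using \<mu> by (intro sum_nonneg) auto
      moreover have "0 \<le> (\<Sum>x\<in>\<Omega>. posterior \<Omega> \<mu> \<pi> s x * u x)"
        using s unfolding A_def adopts_def by simp
      ultimately show ?thesis by simp
    qed
  qed
  finally show ?thesis unfolding A_def .
qed

lemma sender_util_nonneg: "\<forall>x\<in>\<Omega>. 0 \<le> \<mu> x \<Longrightarrow> 0 \<le> sender_util \<Omega> \<mu> \<pi> u"
  unfolding sender_util_def by (intro sum_nonneg) auto

lemma sender_util_le_one:
  assumes "\<forall>x\<in>\<Omega>. 0 \<le> \<mu> x" "(\<Sum>x\<in>\<Omega>. \<mu> x) = 1"
  shows "sender_util \<Omega> \<mu> \<pi> u \<le> 1"
proof -
  have "sender_util \<Omega> \<mu> \<pi> u \<le> (\<Sum>x\<in>\<Omega>. \<mu> x)"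
    unfolding sender_util_def using assms(1) by (intro sum_mono) (simp add: mult_left_le)
  then show ?thesis using assms(2) by simp
qed

lemma sender_util_le_opt_util:
  assumes "\<forall>x\<in>\<Omega>. 0 \<le> \<mu> x" "(\<Sum>x\<in>\<Omega>. \<mu> x) = 1"
  shows "sender_util \<Omega> \<mu> \<pi> u \<le> opt_util \<Omega> \<mu> u"
  unfolding opt_util_def
  using sender_util_le_one[OF assms] by (intro cSUP_upper bdd_aboveI[of _ 1]) auto

lemma opt_util_le: "(\<And>\<pi>. sender_util \<Omega> \<mu> \<pi> u \<le> c) \<Longrightarrow> opt_util \<Omega> \<mu> u \<le> c"
  unfolding opt_util_def by (rule cSUP_least) auto

text \<open>Weak duality for Sender's linear program, with multiplier \<open>t\<close> for Receiver's obedience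
  constraint.\<close>
lemma sender_util_le_dual:
  fixes \<Omega> :: "'w set" and \<mu> :: "'w \<Rightarrow> real"
  assumes "finite \<Omega>" "\<forall>x\<in>\<Omega>. 0 \<le> \<mu> x" "0 \<le> t"
  shows "sender_util \<Omega> \<mu> \<pi> u \<le> (\<Sum>x\<in>\<Omega>. \<mu> x * max 0 (1 + t * u x))"
proof -
  define P where "P x = measure_pmf.prob (\<pi> x) {s. adopts \<Omega> \<mu> \<pi> u s}" for x
  have "sender_util \<Omega> \<mu> \<pi> u \<le> (\<Sum>x\<in>\<Omega>. \<mu> x * P x) + t * (\<Sum>x\<in>\<Omega>. \<mu> x * P x * u x)"
    using adopted_expectation_nonneg[OF assms(1,2), of \<pi> u] assms(3)
    unfolding sender_util_def P_def by simp
  also have "\<dots> = (\<Sum>x\<in>\<Omega>. \<mu> x * (P x * (1 + t * u x)))"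
    by (simp add: sum_distrib_left sum.distrib algebra_simps)
  also have "\<dots> \<le> (\<Sum>x\<in>\<Omega>. \<mu> x * max 0 (1 + t * u x))"
  proof (intro sum_mono mult_left_mono)
    fix x
    have "0 \<le> P x" "P x \<le> 1" unfolding P_def by auto
    then show "P x * (1 + t * u x) \<le> max 0 (1 + t * u x)"
      by (cases "0 \<le> 1 + t * u x") (auto simp: mult_left_le_one_le mult_nonneg_nonpos)
  qed (use assms(2) in auto)
  finally show ?thesis .
qed

lemma reg_mon_md_le:
  assumes \<mu>: "\<forall>x\<in>states k n. 0 \<le> \<mu> x" "(\<Sum>x\<in>states k n. \<mu> x) = 1"
    and regret: "\<And>u. u \<in> mon_utils k n \<Longrightarrow>
      opt_util (states k n) \<mu> u - sender_util (states k n) \<mu> \<pi> u \<le> c"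
  shows "reg_mon_md k n \<mu> \<le> c"
proof -
  define regret where "regret \<pi>' u = opt_util (states k n) \<mu> u - sender_util (states k n) \<mu> \<pi>' u"
    for \<pi>' u
  have bounds: "0 \<le> regret \<pi>' u \<and> regret \<pi>' u \<le> 1" for \<pi>' u
    using sender_util_le_opt_util[OF \<mu>] opt_util_le[OF sender_util_le_one[OF \<mu>]]
      sender_util_nonneg[OF \<mu>(1)]
    unfolding regret_def by (smt (verit))
  have zero: "(\<lambda>_. 0) \<in> mon_utils k n" unfolding mon_utils_def by simp
  have bdd: "bdd_above (regret \<pi>' ` mon_utils k n)" for \<pi>'
    using bounds by (intro bdd_aboveI2) auto
  have "reg_mon_md k n \<mu> = (INF \<pi>'. SUP u\<in>mon_utils k n. regret \<pi>' u)"
    unfolding reg_mon_md_def regret_def ..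
  also have "\<dots> \<le> (SUP u\<in>mon_utils k n. regret \<pi> u)"
    using bounds by (intro cINF_lower bdd_belowI2 cSUP_upper2[OF bdd zero]) auto
  also have "\<dots> \<le> c"
    using zero regret unfolding regret_def by (intro cSUP_least) auto
  finally show ?thesis .
qed

definition binary_signal :: "real \<Rightarrow> nat pmf" where
  "binary_signal r = map_pmf (\<lambda>b. if b then 1 else 0) (bernoulli_pmf r)"

lemma pmf_binary_signal_1: "0 \<le> r \<Longrightarrow> r \<le> 1 \<Longrightarrow> pmf (binary_signal r) 1 = r"
proof -
  assume "0 \<le> r" "r \<le> 1"
  moreover have "(\<lambda>b::bool. if b then 1 else (0::nat)) -` {1} = {True}" by (auto split: if_splits)
  ultimately show ?thesis unfolding binary_signal_def pmf_map by (simp add: measure_pmf_single)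
qed

lemma finite_states: "finite (states k n)"
  unfolding states_def by (intro finite_PiE) auto

locale median_split =
  fixes k :: nat and n :: "nat \<Rightarrow> nat" and m h l :: "nat \<Rightarrow> nat \<Rightarrow> real" and p :: "nat \<Rightarrow> nat"
  assumes m_pos: "\<And>j i. j < k \<Longrightarrow> i < n j \<Longrightarrow> 0 < m j i"
    and m_sum: "\<And>j. j < k \<Longrightarrow> (\<Sum>i<n j. m j i) = 1"
    and m_eq: "\<And>j i. j < k \<Longrightarrow> i < n j \<Longrightarrow> m j i = h j i + l j i"
    and h_sum: "\<And>j. j < k \<Longrightarrow> (\<Sum>i<n j. h j i) = 1 / 2"
    and split: "upper_lower_split {..<k} n h l p"
begin

definition upper :: "(nat \<Rightarrow> nat) \<Rightarrow> real" where
  "upper x = (\<Prod>j<k. h j (x j))"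

definition scheme :: "(nat \<Rightarrow> nat) \<Rightarrow> nat pmf" where
  "scheme x = binary_signal (upper x / prod_prior k m x)"

definition pivot :: "nat \<Rightarrow> nat" where
  "pivot = restrict p {..<k}"

lemma h_nonneg: "j < k \<Longrightarrow> i < n j \<Longrightarrow> 0 \<le> h j i"
  and l_nonneg: "j < k \<Longrightarrow> i < n j \<Longrightarrow> 0 \<le> l j i"
  using split unfolding upper_lower_split_def by auto

lemma prior_pos: "x \<in> states k n \<Longrightarrow> 0 < prod_prior k m x"
  unfolding prod_prior_def states_def using m_pos by (auto intro!: prod_pos)

lemma prior_nonneg: "\<forall>x\<in>states k n. 0 \<le> prod_prior k m x"
  using prior_pos by (simp add: less_imp_le)

lemma prior_sum: "(\<Sum>x\<in>states k n. prod_prior k m x) = 1"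
  unfolding prod_prior_def states_def by (subst prod_sum_PiE[symmetric]) (auto simp: m_sum)

lemma upper_nonneg: "x \<in> states k n \<Longrightarrow> 0 \<le> upper x"
  unfolding upper_def states_def using h_nonneg by (auto intro!: prod_nonneg)

lemma upper_le_prior:
  assumes "x \<in> states k n"
  shows "upper x \<le> prod_prior k m x"
  unfolding upper_def prod_prior_def
proof (rule prod_mono)
  fix j assume "j \<in> {..<k}"
  moreover from this have "x j < n j" using assms unfolding states_def by auto
  ultimately show "0 \<le> h j (x j) \<and> h j (x j) \<le> m j (x j)"
    using h_nonneg l_nonneg m_eq by simp
qed

lemma upper_sum: "(\<Sum>x\<in>states k n. upper x) = 1 / 2 ^ k"
proof -
  have "(\<Sum>x\<in>states k n. upper x) = (\<Prod>j<k. \<Sum>i<n j. h j i)"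
    unfolding upper_def states_def by (subst prod_sum_PiE) auto
  also have "\<dots> = 1 / 2 ^ k"
    by (simp add: h_sum power_one_over)
  finally show ?thesis .
qed

lemma prior_mult_pmf_scheme:
  assumes "x \<in> states k n"
  shows "prod_prior k m x * pmf (scheme x) 1 = upper x"
  using prior_pos[OF assms] upper_nonneg[OF assms] upper_le_prior[OF assms] unfolding scheme_def
  by (subst pmf_binary_signal_1) auto

lemma sender_util_scheme_ge:
  assumes "0 \<le> (\<Sum>x\<in>states k n. upper x * u x)"
  shows "1 / 2 ^ k \<le> sender_util (states k n) (prod_prior k m) scheme u"
proof -
  have sig: "sig_prob (states k n) (prod_prior k m) scheme 1 = 1 / 2 ^ k"
    unfolding sig_prob_def upper_sum[symmetric] by (intro sum.cong refl prior_mult_pmf_scheme)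
  have "(\<Sum>x\<in>states k n. posterior (states k n) (prod_prior k m) scheme 1 x * u x)
      = 2 ^ k * (\<Sum>x\<in>states k n. upper x * u x)"
    unfolding sum_distrib_left
  proof (intro sum.cong refl)
    fix x assume "x \<in> states k n"
    then show "posterior (states k n) (prod_prior k m) scheme 1 x * u x = 2 ^ k * (upper x * u x)"
      unfolding posterior_def sig using prior_mult_pmf_scheme[of x] by simp
  qed
  then have adopts: "adopts (states k n) (prod_prior k m) scheme u 1"
    unfolding adopts_def using assms by simp
  define A where "A = {s. adopts (states k n) (prod_prior k m) scheme u s}"
  have "pmf (scheme x) 1 \<le> measure_pmf.prob (scheme x) A" for x
  proof -
    have "pmf (scheme x) 1 = measure_pmf.prob (scheme x) {1}" by (simp add: measure_pmf_single)
    also have "\<dots> \<le> measure_pmf.prob (scheme x) A"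
      using adopts unfolding A_def by (intro measure_pmf.finite_measure_mono) auto
    finally show ?thesis .
  qed
  then have "(\<Sum>x\<in>states k n. prod_prior k m x * pmf (scheme x) 1)
      \<le> sender_util (states k n) (prod_prior k m) scheme u"
    unfolding sender_util_def A_def using prior_nonneg by (intro sum_mono mult_left_mono) auto
  then show ?thesis
    using sig unfolding sig_prob_def by simp
qed

lemma pivot_in_states: "pivot \<in> states k n"
  using split unfolding pivot_def states_def upper_lower_split_def by auto

lemma mono_pivot_le_of_upper_nonzero:
  assumes "coordwise_mono {..<k} n \<phi>" "x \<in> states k n" "upper x \<noteq> 0"
  shows "\<phi> pivot \<le> \<phi> x"
proof (rule coordwise_mono_le[OF _ assms(1)])
  show "pivot \<in> grid {..<k} n" "x \<in> grid {..<k} n"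
    using pivot_in_states assms(2) unfolding states_def by auto
  show "\<forall>j\<in>{..<k}. pivot j \<le> x j"
  proof
    fix j assume j: "j \<in> {..<k}"
    have "h j (x j) \<noteq> 0" using assms(3) j unfolding upper_def by auto
    moreover have "x j < n j" using assms(2) j unfolding states_def by auto
    ultimately have "\<not> x j < p j" using split j unfolding upper_lower_split_def by blast
    then show "pivot j \<le> x j" using j unfolding pivot_def by simp
  qed
qed simp

lemma mono_le_pivot_of_lower_nonzero:
  assumes "coordwise_mono {..<k} n \<phi>" "x \<in> states k n" "(\<Prod>j<k. l j (x j)) \<noteq> 0"
  shows "\<phi> x \<le> \<phi> pivot"
proof (rule coordwise_mono_le[OF _ assms(1)])
  show "pivot \<in> grid {..<k} n" "x \<in> grid {..<k} n"
    using pivot_in_states assms(2) unfolding states_def by auto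
  show "\<forall>j\<in>{..<k}. x j \<le> pivot j"
  proof
    fix j assume j: "j \<in> {..<k}"
    have "l j (x j) \<noteq> 0" using assms(3) j by auto
    moreover have "x j < n j" using assms(2) j unfolding states_def by auto
    ultimately have "\<not> p j < x j" using split j unfolding upper_lower_split_def by blast
    then show "x j \<le> pivot j" using j unfolding pivot_def by simp
  qed
qed simp

lemma prior_expectation_le_upper:
  assumes mono: "coordwise_mono {..<k} n \<phi>" and nonneg: "\<forall>x\<in>states k n. 0 \<le> \<phi> x"
    and pivot: "\<phi> pivot = 0"
  shows "(\<Sum>x\<in>states k n. prod_prior k m x * \<phi> x)
    \<le> (2 ^ k - 1) * (\<Sum>x\<in>states k n. upper x * \<phi> x)"
proof -
  have lower: "prod_weighted_sum {..<k} n l \<phi> = 0"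
    unfolding prod_weighted_sum_def
  proof (intro sum.neutral ballI)
    fix x assume x: "x \<in> grid {..<k} n"
    show "(\<Prod>j<k. l j (x j)) * \<phi> x = 0"
    proof (cases "(\<Prod>j<k. l j (x j)) = 0")
      case False
      then have "\<phi> x \<le> \<phi> pivot"
        using mono_le_pivot_of_lower_nonzero[OF mono] x unfolding states_def by simp
      then show ?thesis using nonneg x pivot unfolding states_def by force
    qed simp
  qed
  have prior_eq: "prod_prior k m x = (\<Prod>j<k. h j (x j) + l j (x j))" if "x \<in> states k n" for x
    using that m_eq unfolding prod_prior_def states_def by (intro prod.cong) auto
  have "(\<Sum>x\<in>states k n. prod_prior k m x * \<phi> x)
      = prod_weighted_sum {..<k} n (\<lambda>j i. h j i + l j i) \<phi>"
    unfolding prod_weighted_sum_def by (simp add: prior_eq states_def)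
  also have "\<dots> \<le> (2 ^ k - 1) * prod_weighted_sum {..<k} n h \<phi>"
    using prod_weighted_sum_le_lower_upper[OF _ split mono] lower by simp
  also have "\<dots> = (2 ^ k - 1) * (\<Sum>x\<in>states k n. upper x * \<phi> x)"
    unfolding prod_weighted_sum_def upper_def states_def ..
  finally show ?thesis .
qed

lemma utility_at_pivot_neg:
  assumes mono: "coordwise_mono {..<k} n u" and neg: "(\<Sum>x\<in>states k n. upper x * u x) < 0"
  shows "u pivot < 0"
proof -
  have "u pivot / 2 ^ k = (\<Sum>x\<in>states k n. upper x * u pivot)"
    by (simp add: upper_sum flip: sum_distrib_right)
  also have "\<dots> \<le> (\<Sum>x\<in>states k n. upper x * u x)"
  proof (rule sum_mono)
    fix x assume "x \<in> states k n"
    then show "upper x * u pivot \<le> upper x * u x"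
      using mono_pivot_le_of_upper_nonzero[OF mono] upper_nonneg
      by (cases "upper x = 0") (auto intro: mult_left_mono)
  qed
  finally have "u pivot / 2 ^ k < 0" using neg by linarith
  then show ?thesis by (simp add: divide_less_0_iff)
qed

lemma opt_util_le_of_upper_neg:
  assumes u: "u \<in> mon_utils k n" and neg: "(\<Sum>x\<in>states k n. upper x * u x) < 0"
  shows "opt_util (states k n) (prod_prior k m) u \<le> 1 - 1 / 2 ^ k"
proof -
  have mono: "coordwise_mono {..<k} n u" using u by (simp add: mon_utils_iff_coordwise_mono)
  have "u pivot < 0" using utility_at_pivot_neg[OF mono neg] .
  define t where "t = - 1 / u pivot"
  have t: "0 < t" "1 + t * u pivot = 0" unfolding t_def using \<open>u pivot < 0\<close> by auto
  define \<phi> where "\<phi> x = max 0 (1 + t * u x)" for x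
  have "coordwise_mono {..<k} n \<phi>"
    using mono t(1) unfolding coordwise_mono_def \<phi>_def
    by (meson max.mono order_refl add_left_mono mult_left_mono less_imp_le)
  then have "(\<Sum>x\<in>states k n. prod_prior k m x * \<phi> x)
      \<le> (2 ^ k - 1) * (\<Sum>x\<in>states k n. upper x * \<phi> x)"
    by (rule prior_expectation_le_upper) (simp_all add: \<phi>_def t(2))
  also have "(\<Sum>x\<in>states k n. upper x * \<phi> x) = (\<Sum>x\<in>states k n. upper x * (1 + t * u x))"
  proof (intro sum.cong refl)
    fix x assume "x \<in> states k n"
    then have "upper x \<noteq> 0 \<Longrightarrow> u pivot \<le> u x"
      using mono_pivot_le_of_upper_nonzero[OF mono] by blast
    then have "upper x \<noteq> 0 \<Longrightarrow> 0 \<le> 1 + t * u x"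
      using t by (metis add_left_mono mult_left_mono less_imp_le)
    then show "upper x * \<phi> x = upper x * (1 + t * u x)"
      unfolding \<phi>_def by (cases "upper x = 0") auto
  qed
  also have "\<dots> = 1 / 2 ^ k + t * (\<Sum>x\<in>states k n. upper x * u x)"
    by (simp add: upper_sum algebra_simps sum.distrib sum_distrib_left)
  also have "(2 ^ k - 1) * \<dots> \<le> (2 ^ k - 1) * (1 / 2 ^ k)"
    using t(1) neg by (intro mult_left_mono) (auto simp: mult_pos_neg less_imp_le)
  also have "\<dots> = 1 - 1 / 2 ^ k" by (simp add: field_simps)
  finally show ?thesis
    using sender_util_le_dual[OF finite_states prior_nonneg less_imp_le[OF t(1)]] unfolding \<phi>_def
    by (intro opt_util_le) (rule order_trans)
qed

lemma regret_scheme_le: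
  assumes "u \<in> mon_utils k n"
  shows "opt_util (states k n) (prod_prior k m) u - sender_util (states k n) (prod_prior k m) scheme u
    \<le> 1 - 1 / 2 ^ k"
proof (cases "0 \<le> (\<Sum>x\<in>states k n. upper x * u x)")
  case True
  then show ?thesis
    using sender_util_scheme_ge[OF True]
      opt_util_le[OF sender_util_le_one[OF prior_nonneg prior_sum], of u]
    by linarith
next
  case False
  then show ?thesis
    using opt_util_le_of_upper_neg[OF assms] sender_util_nonneg[OF prior_nonneg, of scheme u] by linarith
qed

end

lemma median_split_exists:
  assumes "\<forall>j<k. (\<forall>i<n j. m j i > 0) \<and> (\<Sum>i<n j. m j i) = 1"
  shows "\<exists>h l p. median_split k n m h l p"
proof -
  have "\<exists>q g. j < k \<longrightarrow> q < n j \<and> (\<forall>i<n j. 0 \<le> g i \<and> g i \<le> m j i) \<and>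
      (\<Sum>i<n j. g i) = 1 / 2 \<and>
      (\<forall>i<n j. i < q \<longrightarrow> g i = 0) \<and> (\<forall>i<n j. q < i \<longrightarrow> g i = m j i)" for j
  proof (cases "j < k")
    case True
    then have "0 < n j" using assms by (cases "n j") auto
    then show ?thesis
      using exists_upper_tail[of "n j" "m j" "1 / 2"] assms True by (auto simp: less_imp_le)
  qed simp
  then obtain p h where ph: "\<And>j. j < k \<Longrightarrow>
      p j < n j \<and> (\<forall>i<n j. 0 \<le> h j i \<and> h j i \<le> m j i) \<and> (\<Sum>i<n j. h j i) = 1 / 2 \<and>
      (\<forall>i<n j. i < p j \<longrightarrow> h j i = 0) \<and> (\<forall>i<n j. p j < i \<longrightarrow> h j i = m j i)"
    by metis
  have balanced: "(\<Sum>i<n j. h j i) = (\<Sum>i<n j. m j i - h j i)" if "j < k" for j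
  proof -
    have "(\<Sum>i<n j. m j i - h j i) = 1 - (\<Sum>i<n j. h j i)"
      using assms that by (simp add: sum_subtractf)
    then show ?thesis using ph[OF that] by simp
  qed
  have "median_split k n m h (\<lambda>j i. m j i - h j i) p"
  proof
    show "upper_lower_split {..<k} n h (\<lambda>j i. m j i - h j i) p"
      unfolding upper_lower_split_def using ph balanced by simp
  qed (use assms ph in auto)
  then show ?thesis by blast
qed

theorem proposition3:
  fixes k :: nat and n :: "nat \<Rightarrow> nat" and m :: "nat \<Rightarrow> nat \<Rightarrow> real"
  assumes "\<forall>j<k. (\<forall>i<n j. m j i > 0) \<and> (\<Sum>i<n j. m j i) = 1"
  shows "reg_mon_md k n (prod_prior k m) \<le> 1 - 1 / 2 ^ k"
proof -
  obtain h l p where "median_split k n m h l p"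
    using median_split_exists[OF assms] by blast
  then interpret median_split k n m h l p .
  show ?thesis
    using reg_mon_md_le[OF prior_nonneg prior_sum regret_scheme_le] .
qed

end
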